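(* Let $\kappa$ be a regular uncountable cardinal, $J$ a $\kappa$-complete ideal on $\kappa$, and $\sigma<\kappa$ an infinite cardinal. If $\curlywedge^-(\sigma,\kappa,J)$ holds, then so does $\curlywedge^-(\sigma',\kappa,J)$ for every cardinal $\sigma'$ with $\sigma\leq\sigma'<\kappa$.
   Context: An ideal on $\kappa$ is a nonempty $J \subseteq P(\kappa)$ with $\kappa \notin J$, every bounded subset of $\kappa$ in $J$, $J$ closed under subsets and under unions of two members; $J^+ = P(\kappa)\setminus J$; $\kappa$-complete means closed under unions of fewer than $\kappa$ members. $acc(\kappa)$ is the set of nonzero limit ordinals below $\kappa$; $P_\sigma(X)=\{x\subseteq X:|x|<\sigma\}$. For an infinite cardinal $\sigma$ and a limit ordinal $\delta\geq\sigma$, a subset $C$ of $P_\sigma(\delta)$ is a generalized club if there is $F:P_\omega(\delta)\to\delta$ with $\{x\in P_\sigma(\delta) : F``P_\omega(x)\subseteq x\}\subseteq C$. $\curlywedge^-(\sigma,\kappa,J)$ asserts the existence, for $i\in\delta\in acc(\kappa)\setminus\sigma$, of a cofinal subset $C^i_\delta$ of $(P_\sigma(\delta),\subseteq)$ such that $\{\delta : \exists i<\delta\,(C^i_\delta\subseteq D)\}\in J^+$ for every generalized club $D\subseteq P_\sigma(\kappa)$. *)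

theory Defs
  imports Main "HOL-Library.Countable_Set"
begin

text \<open>Ordinals below the regular cardinal kappa are represented by the elements of a
wellordered type 'k whose order type is kappa.  The ordinal alpha < kappa is identified
with the set of its predecessors {..<alpha}; kappa itself with UNIV.\<close>

definition card_less :: "'a set \<Rightarrow> 'b set \<Rightarrow> bool" where
  "card_less A B \<longleftrightarrow> (card_of A, card_of B) \<in> ordLess"

definition regular_uncountable :: "'k::wellorder itself \<Rightarrow> bool" where
  "regular_uncountable _ \<longleftrightarrow>
     \<not> countable (UNIV :: 'k set) \<and>
     (\<forall>a::'k. card_less {..<a} (UNIV :: 'k set)) \<and>
     (\<forall>A::'k set. card_less A (UNIV :: 'k set) \<longrightarrow> (\<exists>b. \<forall>a\<in>A. a < b))"

definition is_cardinal :: "'k::wellorder \<Rightarrow> bool" where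
  "is_cardinal \<sigma> \<longleftrightarrow> (\<forall>\<beta><\<sigma>. card_less {..<\<beta>} {..<\<sigma>})"

definition infinite_cardinal :: "'k::wellorder \<Rightarrow> bool" where
  "infinite_cardinal \<sigma> \<longleftrightarrow> is_cardinal \<sigma> \<and> infinite {..<\<sigma>}"

definition bounded :: "'k::wellorder set \<Rightarrow> bool" where
  "bounded A \<longleftrightarrow> (\<exists>b. \<forall>a\<in>A. a < b)"

definition ideal_on :: "'k::wellorder set set \<Rightarrow> bool" where
  "ideal_on J \<longleftrightarrow> J \<noteq> {} \<and> UNIV \<notin> J \<and>
     (\<forall>A. bounded A \<longrightarrow> A \<in> J) \<and>
     (\<forall>A B. A \<in> J \<and> B \<subseteq> A \<longrightarrow> B \<in> J) \<and>
     (\<forall>A B. A \<in> J \<and> B \<in> J \<longrightarrow> A \<union> B \<in> J)"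

definition kappa_complete :: "'k::wellorder set set \<Rightarrow> bool" where
  "kappa_complete J \<longleftrightarrow>
     (\<forall>F. F \<subseteq> J \<and> card_less F (UNIV :: 'k set) \<longrightarrow> \<Union>F \<in> J)"

definition limit_ord :: "'k::wellorder \<Rightarrow> bool" where
  "limit_ord \<delta> \<longleftrightarrow> (\<exists>\<beta>. \<beta> < \<delta>) \<and> (\<forall>\<beta><\<delta>. \<exists>\<gamma>. \<beta> < \<gamma> \<and> \<gamma> < \<delta>)"

definition Psig :: "'k::wellorder \<Rightarrow> 'k set \<Rightarrow> 'k set set" where
  "Psig \<sigma> X = {x. x \<subseteq> X \<and> card_less x {..<\<sigma>}}"

definition gen_club :: "'k::wellorder \<Rightarrow> 'k set \<Rightarrow> 'k set set \<Rightarrow> bool" where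
  "gen_club \<sigma> X C \<longleftrightarrow> C \<subseteq> Psig \<sigma> X \<and>
     (\<exists>F. (\<forall>s. finite s \<and> s \<subseteq> X \<longrightarrow> F s \<in> X) \<and>
          {x \<in> Psig \<sigma> X. \<forall>s. finite s \<and> s \<subseteq> x \<longrightarrow> F s \<in> x} \<subseteq> C)"

definition curlywedge_minus :: "'k::wellorder \<Rightarrow> 'k set set \<Rightarrow> bool" where
  "curlywedge_minus \<sigma> J \<longleftrightarrow>
     (\<exists>C :: 'k \<Rightarrow> 'k \<Rightarrow> 'k set set.
        (\<forall>\<delta> i. limit_ord \<delta> \<and> \<sigma> \<le> \<delta> \<and> i < \<delta> \<longrightarrow>
           C i \<delta> \<subseteq> Psig \<sigma> {..<\<delta>} \<and>
           (\<forall>x\<in>Psig \<sigma> {..<\<delta>}. \<exists>y\<in>C i \<delta>. x \<subseteq> y)) \<and>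
        (\<forall>D. gen_club \<sigma> UNIV D \<longrightarrow>
           {\<delta>. limit_ord \<delta> \<and> \<sigma> \<le> \<delta> \<and> (\<exists>i<\<delta>. C i \<delta> \<subseteq> D)} \<notin> J))"

end

theory Submission
  imports Defs "HOL-Algebra.Free_Abelian_Groups" (* brings in HOL-Cardinals, for card_of_Fpow_infinite *)
begin

(* Given witnesses C i \<delta> for \<sigma>, take as new witnesses those y \<in> P_\<sigma>'(\<delta>) every finite
   subset of which lies in a member of C i \<delta> contained in y.  They are cofinal: starting from
   x \<union> \<sigma>, adjoin covering members of C i \<delta> for all finite subsets, \<omega> times; the size stays
   below \<sigma>'.  If F generates a club D in P_\<sigma>'(\<kappa>), the F-closed sets in P_\<sigma>(\<kappa>) form a club D0,
   and whenever C i \<delta> \<subseteq> D0 every new witness is F-closed, hence in D.  So the set of \<delta> that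
   are good for D contains those good for D0 except for the bounded set \<sigma>'. *)

unbundle cardinal_syntax

lemma card_of_Un_UN_Fpow_ordLeq:
  assumes "infinite B" and "|A| \<le>o |B|" and "\<And>s. s \<in> Fpow A \<Longrightarrow> |f s| \<le>o |B|"
  shows "|A \<union> (\<Union>s\<in>Fpow A. f s)| \<le>o |B|"
proof -
  have "|Fpow A| \<le>o |B|"
    using card_of_Fpow_mono[OF assms(2)] card_of_Fpow_infinite[OF assms(1)] by (rule ordLeq_ordIso_trans)
  then have "|\<Union>s\<in>Fpow A. f s| \<le>o |B|"
    using card_of_UNION_ordLeq_infinite assms(1,3) by blast
  with assms(1,2) show ?thesis
    by (rule card_of_Un_ordLeq_infinite)
qed

definition finitely_covered_by :: "'a set set \<Rightarrow> 'a set \<Rightarrow> bool" where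
  "finitely_covered_by CC y \<longleftrightarrow> (\<forall>s. finite s \<and> s \<subseteq> y \<longrightarrow> (\<exists>c\<in>CC. s \<subseteq> c \<and> c \<subseteq> y))"

lemma finitely_covered_by_UN_mono:
  fixes A :: "nat \<Rightarrow> 'a set"
  assumes "mono A" and step: "\<And>n s. s \<in> Fpow (A n) \<Longrightarrow> \<exists>c\<in>CC. s \<subseteq> c \<and> c \<subseteq> A (Suc n)"
  shows "finitely_covered_by CC (\<Union>n. A n)"
  unfolding finitely_covered_by_def
proof (intro allI impI)
  fix s assume "finite s \<and> s \<subseteq> (\<Union>n. A n)"
  then have s: "finite s" "s \<subseteq> \<Union>(range A)"
    by auto
  have "A m \<subseteq> A n \<or> A n \<subseteq> A m" for m n
    using monoD[OF \<open>mono A\<close>] nat_le_linear by blast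
  then have "subset.chain UNIV (range A)"
    by (auto simp: subset.chain_def)
  then obtain B where "B \<in> range A" "s \<subseteq> B"
    using finite_subset_Union_chain[OF s] by blast
  then obtain n where "s \<in> Fpow (A n)"
    using s(1) unfolding Fpow_def by blast
  then obtain c where "c \<in> CC" "s \<subseteq> c" "c \<subseteq> A (Suc n)"
    using step by blast
  then show "\<exists>c\<in>CC. s \<subseteq> c \<and> c \<subseteq> (\<Union>n. A n)"
    by blast
qed

lemma finitely_covered_hull:
  assumes M: "infinite M" "M \<subseteq> X"
    and cover: "\<And>s. s \<in> Fpow X \<Longrightarrow> \<exists>c\<in>CC. s \<subseteq> c"
    and small: "\<And>c. c \<in> CC \<Longrightarrow> c \<subseteq> X \<and> |c| \<le>o |M|"
  obtains y where "M \<subseteq> y" "y \<subseteq> X" "|y| \<le>o |M|" "finitely_covered_by CC y"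
proof -
  obtain cs where cs: "\<And>s. s \<in> Fpow X \<Longrightarrow> cs s \<in> CC \<and> s \<subseteq> cs s"
    using cover by metis
  define g where "g A = A \<union> (\<Union>s\<in>Fpow A. cs s)" for A
  have g: "M \<subseteq> g A \<and> g A \<subseteq> X \<and> |g A| \<le>o |M|" if A: "M \<subseteq> A" "A \<subseteq> X" "|A| \<le>o |M|" for A
  proof -
    have "cs s \<in> CC" if "s \<in> Fpow A" for s
      using cs that A(2) Fpow_mono by blast
    then have "|g A| \<le>o |M|" "g A \<subseteq> X"
      unfolding g_def using card_of_Un_UN_Fpow_ordLeq[OF M(1) A(3)] small A(2) by blast+
    then show ?thesis
      using A(1) unfolding g_def by blast
  qed
  define xn where "xn n = (g ^^ n) M" for n
  have xn: "M \<subseteq> xn n \<and> xn n \<subseteq> X \<and> |xn n| \<le>o |M|" for n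
    by (induction n) (simp_all add: xn_def g M ordLeq_refl[OF card_of_Card_order])
  have "mono xn"
    unfolding mono_iff_le_Suc xn_def g_def by auto
  moreover have "\<exists>c\<in>CC. s \<subseteq> c \<and> c \<subseteq> xn (Suc n)" if s: "s \<in> Fpow (xn n)" for n s
  proof -
    have "Fpow (xn n) \<subseteq> Fpow X"
      using xn by (simp add: Fpow_mono)
    then have "cs s \<in> CC" "s \<subseteq> cs s"
      using cs s by blast+
    moreover have "cs s \<subseteq> xn (Suc n)"
      using s by (auto simp: xn_def g_def)
    ultimately show ?thesis
      by blast
  qed
  ultimately have "finitely_covered_by CC (\<Union>n. xn n)"
    by (rule finitely_covered_by_UN_mono)
  moreover have "|\<Union>n. xn n| \<le>o |M|"
    using card_of_UNION_ordLeq_infinite[OF M(1)] infinite_iff_card_of_nat M(1) xn by blast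
  moreover have "M \<subseteq> (\<Union>n. xn n)" "(\<Union>n. xn n) \<subseteq> X"
    using xn by blast+
  ultimately show thesis
    using that by blast
qed

definition closed_under :: "('a set \<Rightarrow> 'a) \<Rightarrow> 'a set \<Rightarrow> bool" where
  "closed_under F x \<longleftrightarrow> (\<forall>s. finite s \<and> s \<subseteq> x \<longrightarrow> F s \<in> x)"

lemma closed_under_if_finitely_covered_by:
  assumes "finitely_covered_by CC y" and "\<And>c. c \<in> CC \<Longrightarrow> closed_under F c"
  shows "closed_under F y"
  using assms unfolding finitely_covered_by_def closed_under_def by blast

lemma gen_club_finitely_covered:
  assumes "gen_club \<sigma>' X D"
  obtains D0 where "gen_club \<sigma> X D0"
    and "\<And>CC y. CC \<subseteq> D0 \<Longrightarrow> y \<in> Psig \<sigma>' X \<Longrightarrow> finitely_covered_by CC y \<Longrightarrow> y \<in> D"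
proof -
  obtain F where F: "\<forall>s. finite s \<and> s \<subseteq> X \<longrightarrow> F s \<in> X"
    and D: "{x \<in> Psig \<sigma>' X. closed_under F x} \<subseteq> D"
    using assms unfolding gen_club_def closed_under_def by blast
  show thesis
  proof
    show "gen_club \<sigma> X {x \<in> Psig \<sigma> X. closed_under F x}"
      using F unfolding gen_club_def closed_under_def by blast
    show "y \<in> D" if "CC \<subseteq> {x \<in> Psig \<sigma> X. closed_under F x}" "y \<in> Psig \<sigma>' X"
      "finitely_covered_by CC y" for CC y
      using that D closed_under_if_finitely_covered_by by blast
  qed
qed

definition Psig_covered :: "'k::wellorder \<Rightarrow> 'k set \<Rightarrow> 'k set set \<Rightarrow> 'k set set" where
  "Psig_covered \<sigma> X CC = {y \<in> Psig \<sigma> X. finitely_covered_by CC y}"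

lemma Psig_covered_cofinal:
  fixes \<sigma> \<sigma>' :: "'k::wellorder"
  assumes "infinite {..<\<sigma>}" "card_less {..<\<sigma>} {..<\<sigma>'}" "{..<\<sigma>} \<subseteq> X"
    and "CC \<subseteq> Psig \<sigma> X" "\<forall>x\<in>Psig \<sigma> X. \<exists>c\<in>CC. x \<subseteq> c"
    and "x \<in> Psig \<sigma>' X"
  shows "\<exists>y\<in>Psig_covered \<sigma>' X CC. x \<subseteq> y"
proof -
  let ?M = "x \<union> {..<\<sigma>}"
  have "Fpow X \<subseteq> Psig \<sigma> X"
    using finite_ordLess_infinite2 assms(1) by (auto simp: Fpow_def Psig_def card_less_def)
  then have cover: "\<exists>c\<in>CC. s \<subseteq> c" if "s \<in> Fpow X" for s
    using assms(5) that by blast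
  have small: "c \<subseteq> X \<and> |c| \<le>o |?M|" if "c \<in> CC" for c
  proof -
    have "|c| \<le>o |{..<\<sigma>}|"
      using assms(4) that by (auto simp: Psig_def card_less_def ordLess_imp_ordLeq)
    also have "|{..<\<sigma>}| \<le>o |?M|"
      by (simp add: card_of_mono1)
    finally show ?thesis
      using assms(4) that by (auto simp: Psig_def)
  qed
  have "infinite ?M" "?M \<subseteq> X"
    using assms(1,3,6) by (auto simp: Psig_def)
  then obtain y where y: "?M \<subseteq> y" "y \<subseteq> X" "|y| \<le>o |?M|" "finitely_covered_by CC y"
    using finitely_covered_hull[OF _ _ cover small] by blast
  have "infinite {..<\<sigma>'}"
    using assms(1,2) card_of_ordLeq_infinite ordLess_imp_ordLeq unfolding card_less_def by blast
  then have "|?M| <o |{..<\<sigma>'}|"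
    using assms(2,6) card_of_Un_ordLess_infinite unfolding Psig_def card_less_def by blast
  with y(3) have "|y| <o |{..<\<sigma>'}|"
    by (rule ordLeq_ordLess_trans)
  then have "y \<in> Psig \<sigma>' X"
    using y(2) by (simp add: Psig_def card_less_def)
  then show ?thesis
    using y unfolding Psig_covered_def by blast
qed

lemma ideal_on_mem_if_subset_Un_lessThan:
  assumes "ideal_on J" "A \<in> J" "B \<subseteq> A \<union> {..<\<beta>}"
  shows "B \<in> J"
proof -
  have "bounded {..<\<beta>}"
    unfolding bounded_def by blast
  then have "A \<union> {..<\<beta>} \<in> J"
    using assms(1,2) unfolding ideal_on_def by blast
  then show ?thesis
    using assms(1,3) unfolding ideal_on_def by blast
qed

lemma Psig_covered_stationary:
  fixes \<sigma> \<sigma>' :: "'k::wellorder"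
  assumes "ideal_on J" and "gen_club \<sigma>' UNIV D"
    and stationary: "\<And>D0. gen_club \<sigma> UNIV D0 \<Longrightarrow>
      {\<delta>. limit_ord \<delta> \<and> \<sigma> \<le> \<delta> \<and> (\<exists>i<\<delta>. C i \<delta> \<subseteq> D0)} \<notin> J"
  shows "{\<delta>. limit_ord \<delta> \<and> \<sigma>' \<le> \<delta> \<and> (\<exists>i<\<delta>. Psig_covered \<sigma>' {..<\<delta>} (C i \<delta>) \<subseteq> D)} \<notin> J"
proof
  let ?T = "{\<delta>. limit_ord \<delta> \<and> \<sigma>' \<le> \<delta> \<and> (\<exists>i<\<delta>. Psig_covered \<sigma>' {..<\<delta>} (C i \<delta>) \<subseteq> D)}"
  assume "?T \<in> J"
  obtain D0 where D0: "gen_club \<sigma> UNIV D0"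
    and D: "\<And>CC y. CC \<subseteq> D0 \<Longrightarrow> y \<in> Psig \<sigma>' UNIV \<Longrightarrow> finitely_covered_by CC y \<Longrightarrow> y \<in> D"
    using gen_club_finitely_covered[OF assms(2)] by blast
  have covered_D: "Psig_covered \<sigma>' {..<\<delta>} CC \<subseteq> D" if "CC \<subseteq> D0" for CC \<delta>
    using D[OF that] unfolding Psig_covered_def Psig_def by blast
  have "{\<delta>. limit_ord \<delta> \<and> \<sigma> \<le> \<delta> \<and> (\<exists>i<\<delta>. C i \<delta> \<subseteq> D0)} \<subseteq> ?T \<union> {..<\<sigma>'}"
    using covered_D by (auto simp: not_le)
  with \<open>?T \<in> J\<close> have "{\<delta>. limit_ord \<delta> \<and> \<sigma> \<le> \<delta> \<and> (\<exists>i<\<delta>. C i \<delta> \<subseteq> D0)} \<in> J"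
    by (rule ideal_on_mem_if_subset_Un_lessThan[OF assms(1)])
  with stationary[OF D0] show False ..
qed

lemma curlywedge_minus_larger:
  fixes \<sigma> \<sigma>' :: "'k::wellorder"
  assumes "ideal_on J" and "curlywedge_minus \<sigma> J"
    and infinite: "infinite {..<\<sigma>}" and less: "card_less {..<\<sigma>} {..<\<sigma>'}" and "\<sigma> \<le> \<sigma>'"
  shows "curlywedge_minus \<sigma>' J"
proof -
  obtain C where
    cofinal: "\<And>\<delta> i. limit_ord \<delta> \<and> \<sigma> \<le> \<delta> \<and> i < \<delta> \<Longrightarrow>
      C i \<delta> \<subseteq> Psig \<sigma> {..<\<delta>} \<and> (\<forall>x\<in>Psig \<sigma> {..<\<delta>}. \<exists>y\<in>C i \<delta>. x \<subseteq> y)"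
    and stationary: "\<And>D. gen_club \<sigma> UNIV D \<Longrightarrow>
      {\<delta>. limit_ord \<delta> \<and> \<sigma> \<le> \<delta> \<and> (\<exists>i<\<delta>. C i \<delta> \<subseteq> D)} \<notin> J"
    using assms(2) unfolding curlywedge_minus_def by blast
  show ?thesis
    unfolding curlywedge_minus_def
  proof (intro exI[of _ "\<lambda>i \<delta>. Psig_covered \<sigma>' {..<\<delta>} (C i \<delta>)"] conjI allI impI)
    fix \<delta> i assume "limit_ord \<delta> \<and> \<sigma>' \<le> \<delta> \<and> i < \<delta>"
    then have sub: "{..<\<sigma>} \<subseteq> {..<\<delta>}" and "limit_ord \<delta> \<and> \<sigma> \<le> \<delta> \<and> i < \<delta>"
      using \<open>\<sigma> \<le> \<sigma>'\<close> by auto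
    with cofinal have "C i \<delta> \<subseteq> Psig \<sigma> {..<\<delta>}" "\<forall>x\<in>Psig \<sigma> {..<\<delta>}. \<exists>y\<in>C i \<delta>. x \<subseteq> y"
      by blast+
    then show "\<forall>x\<in>Psig \<sigma>' {..<\<delta>}. \<exists>y\<in>Psig_covered \<sigma>' {..<\<delta>} (C i \<delta>). x \<subseteq> y"
      using Psig_covered_cofinal[OF infinite less sub] by blast
    show "Psig_covered \<sigma>' {..<\<delta>} (C i \<delta>) \<subseteq> Psig \<sigma>' {..<\<delta>}"
      unfolding Psig_covered_def by blast
  next
    show "gen_club \<sigma>' UNIV D \<Longrightarrow> {\<delta>. limit_ord \<delta> \<and> \<sigma>' \<le> \<delta> \<and>
        (\<exists>i<\<delta>. Psig_covered \<sigma>' {..<\<delta>} (C i \<delta>) \<subseteq> D)} \<notin> J" for D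
      by (rule Psig_covered_stationary[OF assms(1) _ stationary])
  qed
qed

theorem corollary4p5:
  fixes J :: "'k::wellorder set set" and \<sigma> \<sigma>' :: 'k
  assumes "regular_uncountable TYPE('k)"
    and "ideal_on J" and "kappa_complete J"
    and "infinite_cardinal \<sigma>"
    and "curlywedge_minus \<sigma> J"
    and "is_cardinal \<sigma>'" and "\<sigma> \<le> \<sigma>'"
  shows "curlywedge_minus \<sigma>' J"
proof (cases "\<sigma> = \<sigma>'")
  case True
  then show ?thesis
    using assms(5) by simp
next
  case False
  then have "card_less {..<\<sigma>} {..<\<sigma>'}"
    using assms(6,7) unfolding is_cardinal_def by simp
  moreover have "infinite {..<\<sigma>}"
    using assms(4) unfolding infinite_cardinal_def by blast
  ultimately show ?thesis
    using curlywedge_minus_larger assms(2,5,7) by blast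
qed

end
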